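(* For the step set $\mathcal B$, $$Q_{\mathcal B}(x,0,\tfrac12)=\sum_{n\ge0}\frac{M_n}{2^n}x^n=2\sum_{n\ge0}\Big(-\frac x2\Big)^n\sum_{k=0}^{n+1}\binom{n+1}{k}\big(2^{n+k+2}-1\big)B_{n+k+2},$$ where $(M_n)_{n\ge0}=(1,2,8,56,608,\dots)$ is the sequence of median Genocchi numbers.
   Context: Let $\mathbb N=\{0,1,2,\dots\}$ and $\mathcal B=\{(-1,1),(0,1),(1,0),(1,-1)\}$. $\#_{\mathcal B}\{(0,0)\xrightarrow{n}(i,j)\}$ is the number of sequences $p_0=(0,0),p_1,\dots,p_n=(i,j)$ of points of $\mathbb N^2$ with $p_m-p_{m-1}\in\mathcal B$, and $Q_{\mathcal B}(x,0,\tfrac12)=\sum_{i\ge0}\big(\sum_{n\ge0}\#_{\mathcal B}\{(0,0)\xrightarrow{n}(i,0)\}2^{-n}\big)x^i$ (the inner series converge). Bernoulli numbers: $\sum_{n\ge0}B_n\frac{x^n}{n!}=\frac{x}{e^x-1}$. The median Genocchi numbers are OEIS sequence A005439; equivalently $M_{n}=2(-1)^{n}\sum_{k=0}^{n+1}\binom{n+1}{k}(2^{n+k+2}-1)B_{n+k+2}$ for $n\ge0$. *)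

theory Defs
  imports "HOL-Analysis.Analysis" "HOL-Computational_Algebra.Formal_Power_Series"
begin

definition stepsB :: "(int \<times> int) set" where
  "stepsB = {(-1,1), (0,1), (1,0), (1,-1)}"

definition walksB :: "nat \<Rightarrow> nat \<Rightarrow> nat \<Rightarrow> nat" where
  "walksB n i j = card {ps :: (int \<times> int) list.
      length ps = Suc n \<and> ps ! 0 = (0,0) \<and> ps ! n = (int i, int j) \<and>
      (\<forall>p \<in> set ps. fst p \<ge> 0 \<and> snd p \<ge> 0) \<and>
      (\<forall>m < n. ps ! Suc m - ps ! m \<in> stepsB)}"

definition QB_x0_half :: "real fps" where
  "QB_x0_half = Abs_fps (\<lambda>i. \<Sum>n. real (walksB n i 0) / 2 ^ n)"

definition bernoulli :: "nat \<Rightarrow> real" where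
  "bernoulli n = fact n * fps_nth (fps_X / (fps_exp 1 - 1) :: real fps) n"

definition median_genocchi :: "nat \<Rightarrow> real" where
  "median_genocchi n = 2 * (-1) ^ n * (\<Sum>k = 0..n+1. real ((n+1) choose k) *
      (2 ^ (n+k+2) - 1) * bernoulli (n+k+2))"

end

theory Submission
  imports Defs
begin

text \<open>Let \<open>F(p) = \<Sum>\<^sub>n #{walks 0 \<rightarrow> p of length n} / 2\<^sup>n\<close>. A supersolution bounds these series,
  and \<open>F(p) = [p = 0] + F(p - b\<^sub>1)/2 + \<dots> + F(p - b\<^sub>4)/2\<close> on the quadrant, with \<open>F(x, y) = F(y, x)\<close>.
  The steps \<open>(-1,1)\<close>, \<open>(1,-1)\<close> stay on an antidiagonal \<open>x + y = s\<close> and \<open>(0,1)\<close>, \<open>(1,0)\<close>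
  come from the previous one, so \<open>f\<^sub>s(z) = \<Sum>\<^sub>x F(x, s - x) z\<^sup>x\<close> satisfies
  \<open>(1 - z)\<^sup>2 f\<^sub>s\<^sub>+\<^sub>1 = A\<^sub>s\<^sub>+\<^sub>1 (1 + z\<^bsup>s+3\<^esup>) - z (1 + z) f\<^sub>s\<close> with \<open>A\<^sub>s = F(s, 0)\<close>.
  The kernel method puts \<open>z = (1 - X)/(1 + X)\<close> and telescopes, giving
  \<open>\<Sum>\<^sub>s A\<^sub>s (-2)\<^sup>s B\<^sub>s = 2 (1 - X\<^sup>2)\<close> for explicit series \<open>B\<^sub>s\<close> of order exactly \<open>2 s\<close>;
  this system determines the \<open>A\<^sub>s\<close>.

  The functional \<open>L(T\<^sup>k) = (2\<^sup>k - 1) B\<^sub>k\<close> on polynomials satisfies \<open>L(p(T + 1)) + L(p) = -p'(0)\<close>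
  and \<open>L(p(-1 - T)) = -L(p)\<close>, and \<open>M\<^sub>s = 2 (-1)\<^sup>s L(T (T (T + 1))\<^bsup>s+1\<^esup>)\<close>.
  Summing the geometric series in \<open>T (T + 1) X\<^sup>2/(1 \<mp> X)\<close> over polynomials in \<open>T\<close> and applying
  \<open>L\<close> coefficientwise shows that \<open>(-1)\<^sup>s M\<^sub>s\<close> solves the same system, so \<open>A\<^sub>s = M\<^sub>s / 2\<^sup>s\<close>.\<close>

unbundle no vec_syntax
notation fps_nth (infixl \<open>$\<close> 75)

definition fps_map :: "('a::zero \<Rightarrow> 'b::zero) \<Rightarrow> 'a fps \<Rightarrow> 'b fps" where
  "fps_map f F = Abs_fps (\<lambda>n. f (F $ n))"

lemma fps_map_nth [simp]: "fps_map f F $ n = f (F $ n)"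
  by (simp add: fps_map_def)

lemma fps_map_X_power_mult:
  assumes "f 0 = 0"
  shows "fps_map f (fps_X ^ k * F) = fps_X ^ k * fps_map f F"
  by (rule fps_ext) (simp add: fps_X_power_mult_nth assms)

locale additive_coeff_map =
  fixes f :: "'a::ab_group_add \<Rightarrow> 'b::ab_group_add"
  assumes map_add: "f (x + y) = f x + f y"
begin

lemma map_0: "f 0 = 0"
  using map_add[of 0 0] by simp

lemma map_diff: "f (x - y) = f x - f y"
  using map_add[of "x - y" y] by simp

lemma map_sum: "f (\<Sum>i\<in>A. g i) = (\<Sum>i\<in>A. f (g i))"
  by (induct A rule: infinite_finite_induct) (simp_all add: map_0 map_add)

lemma fps_map_add: "fps_map f (F + G) = fps_map f F + fps_map f G"
  by (rule fps_ext) (simp add: map_add)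

lemma fps_map_diff: "fps_map f (F - G) = fps_map f F - fps_map f G"
  by (rule fps_ext) (simp add: map_diff)

lemma fps_map_sum: "fps_map f (\<Sum>i\<in>A. F i) = (\<Sum>i\<in>A. fps_map f (F i))"
  by (rule fps_ext) (simp add: map_sum fps_sum_nth)

lemma fps_map_const: "fps_map f (fps_const c) = fps_const (f c)"
  by (rule fps_ext) (simp add: map_0)

end

locale ring_hom_coeff_map = additive_coeff_map f for f :: "'a::comm_ring_1 \<Rightarrow> 'b::comm_ring_1" +
  assumes map_mult: "f (x * y) = f x * f y"
    and map_1: "f 1 = 1"
begin

lemma fps_map_mult: "fps_map f (F * G) = fps_map f F * fps_map f G"
  by (rule fps_ext) (simp add: fps_mult_nth map_sum map_mult)

lemma fps_map_1: "fps_map f 1 = 1"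
  by (rule fps_ext) (simp add: map_0 map_1)

lemma fps_map_X: "fps_map f fps_X = fps_X"
  by (rule fps_ext) (simp add: fps_X_def map_0 map_1)

lemma fps_map_power: "fps_map f (F ^ n) = fps_map f F ^ n"
  by (induct n) (simp_all add: fps_map_1 fps_map_mult)

lemma fps_map_of_nat: "fps_map f (of_nat n) = of_nat n"
  by (induct n) (simp_all add: fps_map_1 fps_map_add fps_map_const map_0 flip: fps_const_0_eq_0)

lemma fps_map_numeral: "fps_map f (numeral k) = numeral k"
  using fps_map_of_nat[of "numeral k"] by simp

end

interpretation const_poly: ring_hom_coeff_map "\<lambda>c::'a::comm_ring_1. [:c:]"
  by unfold_locales simp_all

interpretation shift_poly: ring_hom_coeff_map "\<lambda>p::'a::comm_ring_1 poly. pcompose p [:1, 1:]"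
  by unfold_locales (simp_all add: pcompose_add pcompose_mult pcompose_1)

interpretation eval0_poly: ring_hom_coeff_map "\<lambda>p::'a::comm_ring_1 poly. poly p 0"
  by unfold_locales simp_all

section \<open>The umbral Genocchi functional\<close>

text \<open>Up to the factor \<open>-1/2\<close> these are the Genocchi numbers \<open>2 (1 - 2^k) B\<^sub>k\<close>.\<close>
definition umbral_moment :: "nat \<Rightarrow> real" where
  "umbral_moment k = (2 ^ k - 1) * bernoulli k"

text \<open>With \<open>b = X / (e\<^sup>X - 1)\<close> the series is \<open>b(2X) - b(X)\<close>; multiply by
  \<open>e\<^bsup>2X\<^esup> - 1 = (e\<^sup>X - 1) (e\<^sup>X + 1)\<close>.\<close>
lemma umbral_moment_egf: "Abs_fps (\<lambda>k. umbral_moment k / fact k) * (fps_exp 1 + 1) = - fps_X"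
proof -
  define E :: "real fps" where "E = fps_exp 1"
  define b where "b = fps_X / (E - 1)"
  have E1: "E - 1 \<noteq> 0"
  proof
    assume "E - 1 = 0"
    hence "(E - 1) $ 1 = 0" by simp
    thus False by (simp add: E_def)
  qed
  have "subdegree (E - 1) = 1"
    by (rule subdegreeI) (auto simp: E_def)
  hence b: "b * (E - 1) = fps_X"
    using E1 unfolding b_def by (subst dvd_div_mult_self) (auto simp: fps_dvd_iff)
  have "E oo (fps_const 2 * fps_X) = fps_exp (1 + 1)"
    by (simp add: E_def fps_compose_linear fps_exp_def)
  hence E2: "E oo (fps_const 2 * fps_X) = E * E"
    by (simp only: fps_exp_add_mult E_def)
  have "(b * (E - 1)) oo (fps_const 2 * fps_X) = fps_X oo (fps_const 2 * fps_X)"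
    by (simp only: b)
  hence b2: "(b oo (fps_const 2 * fps_X)) * (E * E - 1) = 2 * fps_X"
    by (simp add: fps_compose_mult_distrib fps_compose_sub_distrib E2 numeral_fps_const)
  have C: "Abs_fps (\<lambda>k. umbral_moment k / fact k) = (b oo (fps_const 2 * fps_X)) - b"
  proof (rule fps_ext)
    fix k
    have "((b oo (fps_const 2 * fps_X)) - b) $ k = (2 ^ k - 1) * b $ k"
      by (simp add: left_diff_distrib)
    thus "Abs_fps (\<lambda>k. umbral_moment k / fact k) $ k = ((b oo (fps_const 2 * fps_X)) - b) $ k"
      by (simp add: umbral_moment_def bernoulli_def b_def E_def)
  qed
  have "(Abs_fps (\<lambda>k. umbral_moment k / fact k) * (E + 1) + fps_X) * (E - 1)
      = (b oo (fps_const 2 * fps_X)) * (E * E - 1) - b * (E - 1) * (E + 1) + fps_X * (E - 1)"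
    by (simp add: C algebra_simps)
  also have "\<dots> = 0"
    using b b2 by (simp add: algebra_simps)
  finally show ?thesis
    using E1 by (simp add: E_def add_eq_0_iff2)
qed

lemma umbral_moment_binomial:
  "(\<Sum>k\<le>m. real (m choose k) * umbral_moment k) + umbral_moment m = (if m = 1 then -1 else 0)"
proof -
  define C :: "real fps" where "C = Abs_fps (\<lambda>k. umbral_moment k / fact k)"
  have "(\<Sum>k=0..m. C $ k / fact (m - k)) + C $ m
      = (\<Sum>k=0..m. C $ k / fact (m - k) + (if k = m then C $ k else 0))"
    by (simp add: sum.distrib)
  also have "\<dots> = (C * (fps_exp 1 + 1)) $ m"
    unfolding fps_mult_nth by (intro sum.cong) (auto simp: fps_exp_def)
  also have "\<dots> = (if m = 1 then -1 else 0)"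
    by (simp add: C_def umbral_moment_egf)
  finally have coeff_m: "(\<Sum>k=0..m. C $ k / fact (m - k)) + C $ m = (if m = 1 then -1 else 0)" .
  have "(\<Sum>k\<le>m. real (m choose k) * umbral_moment k) + umbral_moment m
      = fact m * ((\<Sum>k=0..m. C $ k / fact (m - k)) + C $ m)"
    unfolding distrib_left sum_distrib_left atLeast0AtMost
    by (intro arg_cong2[where f = "(+)"] sum.cong) (auto simp: C_def binomial_fact)
  thus ?thesis
    by (simp add: coeff_m)
qed

lemma umbral_moment_0: "umbral_moment 0 = 0"
  by (simp add: umbral_moment_def)

lemma umbral_moment_1: "umbral_moment 1 = -1/2"
  using umbral_moment_binomial[of 1] by (simp add: umbral_moment_0)

definition umbral :: "real poly \<Rightarrow> real" where
  "umbral p = (\<Sum>k\<le>degree p. coeff p k * umbral_moment k)"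

lemma umbral_eq_sum:
  assumes "degree p \<le> N"
  shows "umbral p = (\<Sum>k\<le>N. coeff p k * umbral_moment k)"
  unfolding umbral_def
  by (rule sum.mono_neutral_left) (use assms in \<open>auto simp: coeff_eq_0\<close>)

lemma umbral_add: "umbral (p + q) = umbral p + umbral q"
proof -
  define N where "N = max (degree p) (degree q)"
  have "degree (p + q) \<le> N"
    unfolding N_def by (rule degree_add_le) auto
  thus ?thesis
    by (simp add: umbral_eq_sum[of _ N] N_def sum.distrib algebra_simps)
qed

interpretation umbral: additive_coeff_map umbral
  by unfold_locales (rule umbral_add)

lemma umbral_smult: "umbral (smult a p) = a * umbral p"
  by (simp add: umbral_eq_sum[of _ "degree p"] sum_distrib_left algebra_simps)

lemma umbral_monom: "umbral (monom a k) = a * umbral_moment k"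
proof -
  have "umbral (monom a k) = (\<Sum>j\<le>k. coeff (monom a k) j * umbral_moment j)"
    by (rule umbral_eq_sum) (simp add: degree_monom_le)
  also have "\<dots> = (\<Sum>j\<le>k. if j = k then a * umbral_moment j else 0)"
    by (rule sum.cong) (auto simp: coeff_monom)
  finally show ?thesis by simp
qed

lemma umbral_linear: "umbral [:a, b:] = - b / 2"
  by (simp add: umbral_eq_sum[of _ 1] umbral_moment_0 umbral_moment_1[unfolded One_nat_def])

lemma poly_functional_eq_0:
  fixes \<phi> :: "'a::comm_ring_1 poly \<Rightarrow> 'a"
  assumes add: "\<And>p q. \<phi> (p + q) = \<phi> p + \<phi> q"
    and smult: "\<And>a p. \<phi> (smult a p) = a * \<phi> p"
    and monom: "\<And>m. \<phi> (monom 1 m) = 0"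
  shows "\<phi> p = 0"
proof -
  interpret additive_coeff_map \<phi> by unfold_locales (rule add)
  have "\<phi> p = \<phi> (\<Sum>i\<le>degree p. smult (coeff p i) (monom 1 i))"
    by (simp add: smult_monom poly_as_sum_of_monoms)
  also have "\<dots> = 0"
    by (simp add: map_sum smult monom)
  finally show ?thesis .
qed

lemma pcompose_power: "pcompose (p ^ n) q = pcompose p q ^ n"
  by (induct n) (simp_all add: pcompose_1 pcompose_mult)

lemma monom_pcompose: "pcompose (monom 1 m) q = q ^ m"
  by (simp add: monom_altdef pcompose_power pcompose_pCons)

lemma binomial_poly: "[:1, 1:] ^ m = (\<Sum>k\<le>m. monom (of_nat (m choose k)) k)"
proof (rule poly_eqI)
  fix j
  have "degree ([:1, 1::'a:] ^ m) \<le> m"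
    using degree_power_le[of "[:1, 1::'a:]" m] by simp
  thus "coeff ([:1, 1::'a::comm_semiring_1:] ^ m) j = coeff (\<Sum>k\<le>m. monom (of_nat (m choose k)) k) j"
    by (cases "j \<le> m") (auto simp: coeff_sum coeff_monom coeff_linear_poly_power coeff_eq_0)
qed

lemma umbral_pcompose_shift: "umbral (pcompose p [:1, 1:]) + umbral p = - coeff p 1"
proof -
  have "umbral (pcompose p [:1, 1:]) + umbral p + coeff p 1 = 0"
  proof (rule poly_functional_eq_0[where \<phi> = "\<lambda>p. umbral (pcompose p [:1, 1:]) + umbral p + coeff p 1"])
    fix m
    have "umbral (pcompose (monom 1 m) [:1, 1:]) = (\<Sum>k\<le>m. real (m choose k) * umbral_moment k)"
      by (simp add: monom_pcompose binomial_poly umbral.map_sum umbral_monom)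
    thus "umbral (pcompose (monom 1 m) [:1, 1:]) + umbral (monom 1 m) + coeff (monom 1 m) 1 = 0"
      using umbral_moment_binomial[of m] by (simp add: umbral_monom coeff_monom)
  qed (simp_all add: pcompose_add umbral_add pcompose_smult umbral_smult algebra_simps)
  thus ?thesis by simp
qed

text \<open>The reflection \<open>T \<mapsto> -1 - T\<close> conjugates the shift \<open>T \<mapsto> T + 1\<close> into its inverse, so
  \<open>\<phi> = umbral + umbral \<circ> reflection\<close> kills every \<open>p(T + 1) + p\<close>, and these span all polynomials.\<close>
lemma umbral_pcompose_reflect: "umbral (pcompose p [:-1, -1:]) = - umbral p"
proof -
  define \<phi> where "\<phi> p = umbral p + umbral (pcompose p [:-1, -1:])" for p
  have add: "\<phi> (p + q) = \<phi> p + \<phi> q" for p q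
    by (simp add: \<phi>_def pcompose_add umbral_add)
  have smult: "\<phi> (smult a p) = a * \<phi> p" for a p
    by (simp add: \<phi>_def pcompose_smult umbral_smult algebra_simps)
  interpret \<phi>: additive_coeff_map \<phi> by unfold_locales (rule add)
  have shift: "\<phi> (pcompose p [:1, 1:] + p) = 0" for p
  proof -
    define r where "r = pcompose p [:0, -1:]"
    have "pcompose (pcompose p [:1, 1:]) [:-1, -1:] = r"
      by (simp add: r_def pcompose_pCons flip: pcompose_assoc)
    moreover have "pcompose p [:-1, -1:] = pcompose r [:1, 1:]"
      by (simp add: r_def pcompose_pCons flip: pcompose_assoc)
    moreover have "coeff r 1 = - coeff p 1"
      by (simp add: r_def coeff_pcompose_linear)
    ultimately show ?thesis
      using umbral_pcompose_shift[of p] umbral_pcompose_shift[of r]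
      by (simp add: \<phi>_def pcompose_add umbral_add)
  qed
  have "\<phi> (monom 1 m) = 0" for m
  proof (induct m rule: less_induct)
    case (less m)
    have "pcompose (monom 1 m) [:1, 1:] = monom 1 m + (\<Sum>k<m. smult (real (m choose k)) (monom 1 k))"
      by (simp add: monom_pcompose binomial_poly lessThan_Suc_atMost[symmetric] smult_monom)
    hence "0 = \<phi> (monom 1 m) + \<phi> (\<Sum>k<m. smult (real (m choose k)) (monom 1 k)) + \<phi> (monom 1 m)"
      using shift[of "monom 1 m"] by (simp only: add)
    hence "0 = 2 * \<phi> (monom 1 m) + (\<Sum>k<m. real (m choose k) * \<phi> (monom 1 k))"
      by (simp add: smult \<phi>.map_sum)
    thus ?case using less by simp
  qed
  hence "\<phi> p = 0"
    by (rule poly_functional_eq_0[OF add smult])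
  thus ?thesis by (simp add: \<phi>_def)
qed

lemma umbral_power_reflection_invariant:
  assumes "pcompose p [:-1, -1:] = p"
  shows "umbral (p ^ k) = 0"
  using umbral_pcompose_reflect[of "p ^ k"] assms by (simp add: pcompose_power)

lemma median_genocchi_umbral:
  "median_genocchi n = 2 * (-1) ^ n * umbral ([:0, 1:] * [:0, 1, 1:] ^ (n + 1))"
proof -
  define q :: "real poly" where "q = [:1, 1:] ^ (n + 1)"
  have factor: "[:0, 1:] * [:0, 1, 1:] ^ (n + 1) = monom 1 (n + 2) * q"
  proof -
    have w: "[:0, 1, 1::real:] = [:0, 1:] * [:1, 1:]" by simp
    have "[:0, 1::real:] * ([:0, 1:] * [:1, 1:]) ^ Suc n = [:0, 1:] ^ Suc (Suc n) * [:1, 1:] ^ Suc n"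
      by (simp only: power_mult_distrib power_Suc mult_ac)
    thus ?thesis
      unfolding w q_def by (simp only: monom_altdef smult_1_left Suc_eq_plus1 add_2_eq_Suc')
  qed
  have "degree (monom 1 (n + 2) * q) \<le> (n + 2) + (n + 1)"
    using degree_mult_le[of "monom 1 (n + 2)" q] degree_power_le[of "[:1, 1::real:]" "n + 1"]
    by (simp add: q_def degree_monom_eq)
  hence "umbral (monom 1 (n + 2) * q) = (\<Sum>j\<le>(n + 2) + (n + 1). coeff (monom 1 (n + 2) * q) j * umbral_moment j)"
    by (rule umbral_eq_sum)
  also have "\<dots> = (\<Sum>j\<in>{0 + (n + 2)..(n + 1) + (n + 2)}. coeff q (j - (n + 2)) * umbral_moment j)"
    by (rule sum.mono_neutral_cong_right) (auto simp: coeff_monom_mult)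
  also have "\<dots> = (\<Sum>k=0..n+1. real ((n + 1) choose k) * umbral_moment (n + k + 2))"
    unfolding sum.shift_bounds_cl_nat_ivl
  proof (intro sum.cong refl)
    fix k assume "k \<in> {0..n + 1}"
    hence "coeff q k = real ((n + 1) choose k)"
      unfolding q_def by (subst coeff_linear_poly_power) auto
    thus "coeff q (k + (n + 2) - (n + 2)) * umbral_moment (k + (n + 2))
        = real ((n + 1) choose k) * umbral_moment (n + k + 2)"
      by (simp add: add.commute add.left_commute)
  qed
  finally have "umbral ([:0, 1:] * [:0, 1, 1:] ^ (n + 1))
      = (\<Sum>k=0..n+1. real ((n + 1) choose k) * umbral_moment (n + k + 2))"
    by (simp only: factor)
  thus ?thesis
    by (simp only: median_genocchi_def umbral_moment_def mult.assoc)
qed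

lemma umbral_genocchi:
  "umbral ([:1, 2:] * [:0, 1, 1:] ^ (n + 1)) = (-1) ^ n * median_genocchi n"
proof -
  define u where "u = umbral ([:0, 1:] * [:0, 1, 1:] ^ (n + 1))"
  have "[:1, 2:] * [:0, 1, 1:] ^ (n + 1) = [:0, 1, 1:] ^ (n + 1) + smult 2 ([:0, 1:] * [:0, 1, 1::real:] ^ (n + 1))"
    by (simp add: smult_add_left)
  moreover have "umbral ([:0, 1, 1:] ^ (n + 1)) = 0"
    by (rule umbral_power_reflection_invariant) (simp add: pcompose_pCons)
  ultimately have "umbral ([:1, 2:] * [:0, 1, 1:] ^ (n + 1)) = 2 * u"
    by (simp only: umbral_add umbral_smult u_def add_0_left)
  moreover have "(-1) ^ n * median_genocchi n = 2 * u"
    using median_genocchi_umbral[of n] unfolding u_def[symmetric]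
    by (simp flip: power_add)
  ultimately show ?thesis by simp
qed

section \<open>Quadrant walks\<close>

definition in_quadrant :: "int \<times> int \<Rightarrow> bool" where
  "in_quadrant p \<longleftrightarrow> fst p \<ge> 0 \<and> snd p \<ge> 0"

definition quadrant_walks :: "(int \<times> int) set \<Rightarrow> nat \<Rightarrow> int \<times> int \<Rightarrow> (int \<times> int) list set" where
  "quadrant_walks S n p = {ps. length ps = Suc n \<and> ps ! 0 = (0, 0) \<and> ps ! n = p \<and>
      (\<forall>q \<in> set ps. fst q \<ge> 0 \<and> snd q \<ge> 0) \<and> (\<forall>m < n. ps ! Suc m - ps ! m \<in> S)}"

lemma quadrant_walks_0: "quadrant_walks S 0 p = (if p = (0, 0) then {[(0, 0)]} else {})"
proof -
  have "ps \<in> quadrant_walks S 0 p \<longleftrightarrow> p = (0, 0) \<and> ps = [(0, 0)]" for ps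
  proof
    assume "ps \<in> quadrant_walks S 0 p"
    hence "length ps = 1" "ps ! 0 = (0, 0)" "ps ! 0 = p"
      by (auto simp: quadrant_walks_def)
    thus "p = (0, 0) \<and> ps = [(0, 0)]"
      by (cases ps) auto
  qed (auto simp: quadrant_walks_def)
  thus ?thesis by auto
qed

lemma quadrant_walks_butlast:
  assumes "ps \<in> quadrant_walks S (Suc n) p"
  shows "\<exists>b\<in>S. ps = butlast ps @ [p] \<and> butlast ps \<in> quadrant_walks S n (p - b)"
proof
  from assms have len: "length ps = Suc (Suc n)" and p0: "ps ! 0 = (0, 0)" and pn: "ps ! Suc n = p"
    and nonneg: "\<forall>q \<in> set ps. fst q \<ge> 0 \<and> snd q \<ge> 0" and steps: "\<forall>m < Suc n. ps ! Suc m - ps ! m \<in> S"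
    by (auto simp: quadrant_walks_def)
  have butlast_nth: "butlast ps ! i = ps ! i" if "i < Suc n" for i
    using that len by (simp add: nth_butlast)
  show "p - ps ! n \<in> S"
    using steps pn by auto
  have "ps \<noteq> []"
    using len by auto
  moreover have "last ps = p"
    using pn len \<open>ps \<noteq> []\<close> by (simp add: last_conv_nth)
  ultimately show "ps = butlast ps @ [p] \<and> butlast ps \<in> quadrant_walks S n (p - (p - ps ! n))"
    using len p0 butlast_nth[of 0] butlast_nth[of n] nonneg steps butlast_nth
    by (auto simp: quadrant_walks_def dest: in_set_butlastD)
qed

lemma quadrant_walks_snoc:
  assumes "b \<in> S" "qs \<in> quadrant_walks S n (p - b)" "in_quadrant p"
  shows "qs @ [p] \<in> quadrant_walks S (Suc n) p"
proof -
  from assms(2) have len: "length qs = Suc n" and "qs ! n = p - b"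
    and steps: "\<forall>m < n. qs ! Suc m - qs ! m \<in> S"
    by (auto simp: quadrant_walks_def)
  hence "(qs @ [p]) ! Suc m - (qs @ [p]) ! m \<in> S" if "m < Suc n" for m
    using that assms(1) \<open>qs ! n = p - b\<close> by (auto simp: nth_append less_Suc_eq)
  thus ?thesis
    using assms len by (auto simp: quadrant_walks_def nth_append in_quadrant_def)
qed

lemma quadrant_walks_Suc:
  "quadrant_walks S (Suc n) p =
    (if in_quadrant p then (\<Union>b\<in>S. (\<lambda>qs. qs @ [p]) ` quadrant_walks S n (p - b)) else {})"
proof (cases "in_quadrant p")
  case True
  thus ?thesis
    using quadrant_walks_butlast[of _ S n p] quadrant_walks_snoc[of _ S _ n p] by fastforce
next
  case False
  have "p \<in> set ps" if "ps \<in> quadrant_walks S (Suc n) p" for ps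
    using that nth_mem[of "Suc n" ps] by (auto simp: quadrant_walks_def)
  thus ?thesis
    using False by (auto simp: quadrant_walks_def in_quadrant_def)
qed

lemma finite_quadrant_walks: "finite S \<Longrightarrow> finite (quadrant_walks S n p)"
  by (induct n arbitrary: p) (simp_all add: quadrant_walks_0 quadrant_walks_Suc)

lemma card_quadrant_walks_Suc:
  assumes "finite S"
  shows "card (quadrant_walks S (Suc n) p) =
    (if in_quadrant p then (\<Sum>b\<in>S. card (quadrant_walks S n (p - b))) else 0)"
proof (cases "in_quadrant p")
  case True
  have "card (\<Union>b\<in>S. (\<lambda>qs. qs @ [p]) ` quadrant_walks S n (p - b))
      = (\<Sum>b\<in>S. card ((\<lambda>qs. qs @ [p]) ` quadrant_walks S n (p - b)))"
  proof (rule card_UN_disjoint)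
    show "\<forall>b\<in>S. \<forall>b'\<in>S. b \<noteq> b' \<longrightarrow>
        (\<lambda>qs. qs @ [p]) ` quadrant_walks S n (p - b) \<inter> (\<lambda>qs. qs @ [p]) ` quadrant_walks S n (p - b') = {}"
      by (auto simp: quadrant_walks_def)
  qed (simp_all add: assms finite_quadrant_walks)
  also have "\<dots> = (\<Sum>b\<in>S. card (quadrant_walks S n (p - b)))"
    by (intro sum.cong refl card_image) (simp add: inj_on_def)
  finally show ?thesis
    using True by (simp add: quadrant_walks_Suc)
qed (simp add: quadrant_walks_Suc)

definition num_walks :: "nat \<Rightarrow> int \<times> int \<Rightarrow> nat" where
  "num_walks n p = card (quadrant_walks stepsB n p)"

lemma walksB_eq_num_walks: "walksB n i j = num_walks n (int i, int j)"
  by (simp add: walksB_def num_walks_def quadrant_walks_def)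

lemma sum_stepsB: "(\<Sum>b\<in>stepsB. f b) = f (-1, 1) + f (0, 1) + f (1, 0) + f (1, -1)"
  by (simp add: stepsB_def add.assoc)

lemma num_walks_0: "num_walks 0 p = (if p = (0, 0) then 1 else 0)"
  by (simp add: num_walks_def quadrant_walks_0)

lemma num_walks_Suc:
  "num_walks (Suc n) p = (if in_quadrant p then (\<Sum>b\<in>stepsB. num_walks n (p - b)) else 0)"
  unfolding num_walks_def by (rule card_quadrant_walks_Suc) (simp add: stepsB_def)

lemma num_walks_outside: "\<not> in_quadrant p \<Longrightarrow> num_walks n p = 0"
  by (cases n) (auto simp: num_walks_0 num_walks_Suc in_quadrant_def)

lemma num_walks_swap: "num_walks n (x, y) = num_walks n (y, x)"
proof (induct n arbitrary: x y)
  case (Suc n)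
  have "in_quadrant (x, y) = in_quadrant (y, x)"
    by (auto simp: in_quadrant_def)
  thus ?case
    using Suc[of "y + 1" "x - 1"] Suc[of y "x - 1"] Suc[of "y - 1" x] Suc[of "y - 1" "x + 1"]
    by (simp add: num_walks_Suc sum_stepsB)
qed (auto simp: num_walks_0)

section \<open>The walk series at \<open>t = 1/2\<close>\<close>

definition walk_partial_sum :: "nat \<Rightarrow> int \<times> int \<Rightarrow> real" where
  "walk_partial_sum N p = (\<Sum>n<N. real (num_walks n p) / 2 ^ n)"

lemma walk_partial_sum_Suc:
  assumes "in_quadrant p"
  shows "walk_partial_sum (Suc N) p
    = (if p = (0, 0) then 1 else 0) + (1/2) * (\<Sum>b\<in>stepsB. walk_partial_sum N (p - b))"
proof -
  have "walk_partial_sum (Suc N) p = real (num_walks 0 p) + (\<Sum>n<N. real (num_walks (Suc n) p) / 2 ^ Suc n)"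
    unfolding walk_partial_sum_def by (subst sum.lessThan_Suc_shift) simp
  also have "(\<Sum>n<N. real (num_walks (Suc n) p) / 2 ^ Suc n)
      = (\<Sum>n<N. \<Sum>b\<in>stepsB. (1/2) * (real (num_walks n (p - b)) / 2 ^ n))"
    by (rule sum.cong) (simp_all add: num_walks_Suc assms sum_divide_distrib)
  also have "\<dots> = (1/2) * (\<Sum>b\<in>stepsB. walk_partial_sum N (p - b))"
    by (simp add: walk_partial_sum_def sum_distrib_left sum.swap[of _ stepsB])
  finally show ?thesis by (simp add: num_walks_0)
qed

lemma walk_partial_sum_outside: "\<not> in_quadrant p \<Longrightarrow> walk_partial_sum N p = 0"
  by (simp add: walk_partial_sum_def num_walks_outside)

definition walk_bound :: "int \<times> int \<Rightarrow> real" where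
  "walk_bound p = (if in_quadrant p
     then (fact (nat (fst p + snd p) + 1))\<^sup>2 * real_of_int (fst p + 1) * real_of_int (snd p + 1) else 0)"

lemma walk_bound_nonneg: "walk_bound p \<ge> 0"
  by (auto simp: walk_bound_def in_quadrant_def)

lemma walk_bound_steps:
  fixes x y :: int
  assumes x: "x \<ge> 0" and y: "y \<ge> 0"
  defines "F \<equiv> (fact (nat (x + y) + 1) :: real)\<^sup>2" and "F' \<equiv> (fact (nat (x + y)) :: real)\<^sup>2"
  shows "(\<Sum>b\<in>stepsB. walk_bound ((x, y) - b))
      = F * ((x + 2) * y + x * (y + 2)) + F' * ((x + 1) * y + x * (y + 1))"
proof -
  have "walk_bound (x, y - 1) = F' * (x + 1) * y"
  proof (cases "y = 0")
    case False
    hence "nat (x + (y - 1)) + 1 = nat (x + y)" using x y by simp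
    thus ?thesis using x y False by (simp add: walk_bound_def in_quadrant_def F'_def)
  qed (simp add: walk_bound_def in_quadrant_def)
  moreover have "walk_bound (x - 1, y) = F' * x * (y + 1)"
  proof (cases "x = 0")
    case False
    hence "nat (x - 1 + y) + 1 = nat (x + y)" using x y by simp
    thus ?thesis using x y False by (simp add: walk_bound_def in_quadrant_def F'_def)
  qed (simp add: walk_bound_def in_quadrant_def)
  moreover have "walk_bound (x + 1, y - 1) = F * (x + 2) * y" "walk_bound (x - 1, y + 1) = F * x * (y + 2)"
    using x y by (auto simp: walk_bound_def in_quadrant_def F_def)
  ultimately show ?thesis
    by (simp add: sum_stepsB algebra_simps)
qed

text \<open>On the antidiagonal \<open>x + y = s\<close> the two steps \<open>(-1,1)\<close> and \<open>(1,-1)\<close> use up all of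
  \<open>walk_bound (x, y)\<close> except \<open>((s+1)!)\<^sup>2\<close>, which absorbs the two steps from the antidiagonal \<open>s - 1\<close>.\<close>
lemma walk_bound_super:
  assumes "in_quadrant p"
  shows "(if p = (0, 0) then 1 else 0) + (1/2) * (\<Sum>b\<in>stepsB. walk_bound (p - b)) \<le> walk_bound p"
proof -
  obtain x y where xy: "p = (x, y)" and x: "x \<ge> 0" and y: "y \<ge> 0"
    using assms by (cases p) (auto simp: in_quadrant_def)
  define s where "s = nat (x + y)"
  have s: "real s = real_of_int x + real_of_int y"
    using x y by (simp add: s_def)
  define F where "F = (fact (s + 1) :: real)\<^sup>2"
  define F' where "F' = (fact s :: real)\<^sup>2"
  have "(fact (s + 1) :: real) = (real s + 1) * fact s"
    by (simp add: algebra_simps)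
  hence FF': "F = (real s + 1)\<^sup>2 * F'"
    by (simp only: F_def F'_def power_mult_distrib)
  have "(if p = (0, 0) then 1 else 0) + (1/2) * (F' * ((x + 1) * y + x * (y + 1))) \<le> F"
  proof (cases "p = (0, 0)")
    case False
    have "real_of_int (x + 1) * y \<le> (real s + 1) * (real s + 1)"
      and "real_of_int x * (y + 1) \<le> (real s + 1) * (real s + 1)"
      by (rule mult_mono; use x y s in auto)+
    moreover have "F' \<ge> 0" by (simp add: F'_def)
    ultimately have "F' * ((x + 1) * y) + F' * (x * (y + 1)) \<le> F' * (real s + 1)\<^sup>2 + F' * (real s + 1)\<^sup>2"
      by (intro add_mono mult_left_mono) (simp_all add: power2_eq_square)
    thus ?thesis using False FF' by (simp add: algebra_simps)
  qed (use xy in \<open>simp add: F_def s_def\<close>)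
  moreover have "walk_bound p = F * (x + 1) * (y + 1)"
    using x y by (simp add: xy walk_bound_def in_quadrant_def F_def s_def)
  ultimately show ?thesis
    using walk_bound_steps[OF x y] by (simp add: xy F_def F'_def s_def algebra_simps)
qed

lemma walk_partial_sum_le_bound: "walk_partial_sum N p \<le> walk_bound p"
proof (induct N arbitrary: p)
  case 0
  thus ?case by (simp add: walk_partial_sum_def walk_bound_nonneg)
next
  case (Suc N)
  show ?case
  proof (cases "in_quadrant p")
    case True
    have "walk_partial_sum (Suc N) p
        = (if p = (0, 0) then 1 else 0) + (1/2) * (\<Sum>b\<in>stepsB. walk_partial_sum N (p - b))"
      by (rule walk_partial_sum_Suc[OF True])
    also have "\<dots> \<le> (if p = (0, 0) then 1 else 0) + (1/2) * (\<Sum>b\<in>stepsB. walk_bound (p - b))"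
      using Suc by (intro add_left_mono mult_left_mono sum_mono) auto
    also have "\<dots> \<le> walk_bound p"
      by (rule walk_bound_super[OF True])
    finally show ?thesis .
  qed (simp add: walk_partial_sum_outside walk_bound_nonneg)
qed

lemma summable_num_walks: "summable (\<lambda>n. real (num_walks n p) / 2 ^ n)"
  by (rule summableI_nonneg_bounded[where x = "walk_bound p"])
     (use walk_partial_sum_le_bound in \<open>auto simp: walk_partial_sum_def\<close>)

definition walk_series :: "int \<times> int \<Rightarrow> real" where
  "walk_series p = (\<Sum>n. real (num_walks n p) / 2 ^ n)"

lemma walk_series_eq:
  assumes "in_quadrant p"
  shows "walk_series p = (if p = (0, 0) then 1 else 0) + (1/2) * (\<Sum>b\<in>stepsB. walk_series (p - b))"
proof -
  have lim: "(\<lambda>N. walk_partial_sum N q) \<longlonglongrightarrow> walk_series q" for q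
    unfolding walk_partial_sum_def walk_series_def by (rule summable_LIMSEQ[OF summable_num_walks])
  have "(\<lambda>N. walk_partial_sum (Suc N) p) \<longlonglongrightarrow> walk_series p"
    using lim by (rule LIMSEQ_Suc)
  moreover have "(\<lambda>N. (if p = (0, 0) then 1 else 0) + (1/2) * (\<Sum>b\<in>stepsB. walk_partial_sum N (p - b)))
      \<longlonglongrightarrow> (if p = (0, 0) then 1 else 0) + (1/2) * (\<Sum>b\<in>stepsB. walk_series (p - b))"
    by (intro tendsto_intros lim)
  ultimately show ?thesis
    by (simp add: walk_partial_sum_Suc[OF assms] LIMSEQ_unique)
qed

lemma walk_series_outside: "\<not> in_quadrant p \<Longrightarrow> walk_series p = 0"
  by (simp add: walk_series_def num_walks_outside)

lemma walk_series_swap: "walk_series (x, y) = walk_series (y, x)"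
  by (simp add: walk_series_def num_walks_swap)

lemma walk_series_origin: "walk_series (0, 0) = 1"
  using walk_series_eq[of "(0, 0)"] by (simp add: in_quadrant_def sum_stepsB walk_series_outside)

section \<open>The kernel method\<close>

definition antidiag_value :: "nat \<Rightarrow> int \<Rightarrow> real" where
  "antidiag_value s x = walk_series (x, int s - x)"

definition axis_value :: "nat \<Rightarrow> real" where
  "axis_value s = walk_series (0, int s)"

definition level_poly :: "nat \<Rightarrow> real fps \<Rightarrow> real fps" where
  "level_poly s z = (\<Sum>x\<le>s. fps_const (antidiag_value s (int x)) * z ^ x)"

lemma antidiag_value_outside: "x < 0 \<or> x > int s \<Longrightarrow> antidiag_value s x = 0"
  by (auto simp: antidiag_value_def walk_series_outside in_quadrant_def)

lemma antidiag_value_ends: "antidiag_value s 0 = axis_value s" "antidiag_value s (int s) = axis_value s"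
  by (simp_all add: antidiag_value_def axis_value_def walk_series_swap)

lemma antidiag_value_rec:
  assumes "0 \<le> x" "x \<le> int (Suc s)"
  shows "2 * antidiag_value (Suc s) x
    = antidiag_value (Suc s) (x + 1) + antidiag_value (Suc s) (x - 1) + antidiag_value s x + antidiag_value s (x - 1)"
proof -
  define S where "S = int (Suc s)"
  have "in_quadrant (x, S - x)" "(x, S - x) \<noteq> (0, 0)"
    using assms by (auto simp: in_quadrant_def S_def)
  moreover have "(x, S - x) - (-1, 1) = (x + 1, S - (x + 1))" "(x, S - x) - (0, 1) = (x, int s - x)"
    "(x, S - x) - (1, 0) = (x - 1, int s - (x - 1))" "(x, S - x) - (1, -1) = (x - 1, S - (x - 1))"
    by (simp_all add: S_def)
  ultimately have "walk_series (x, S - x) = (1/2) * (walk_series (x + 1, S - (x + 1))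
      + walk_series (x, int s - x) + walk_series (x - 1, int s - (x - 1)) + walk_series (x - 1, S - (x - 1)))"
    using walk_series_eq[of "(x, S - x)"] by (simp only: sum_stepsB) simp
  thus ?thesis by (simp add: antidiag_value_def S_def algebra_simps)
qed

lemma sum_atMost_shift_down:
  fixes G :: "int \<Rightarrow> 'a::comm_ring_1"
  assumes "G (int n + 1) = 0"
  shows "(\<Sum>x\<le>n. G (int x + 1) * z ^ (x + 1)) = (\<Sum>x\<le>n. G (int x) * z ^ x) - G 0"
proof -
  have "(\<Sum>x\<le>n. G (int x) * z ^ x) = (\<Sum>x\<le>Suc n. G (int x) * z ^ x)"
    using assms by (simp add: ac_simps)
  also have "\<dots> = G 0 + (\<Sum>x\<le>n. G (int x + 1) * z ^ (x + 1))"
    by (subst sum.atMost_Suc_shift) (simp add: add.commute)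
  finally show ?thesis by simp
qed

lemma sum_atMost_shift_up:
  fixes G :: "int \<Rightarrow> 'a::comm_ring_1"
  assumes "G (-1) = 0"
  shows "(\<Sum>x\<le>Suc n. G (int x - 1) * z ^ (x + 1)) = z\<^sup>2 * (\<Sum>x\<le>n. G (int x) * z ^ x)"
  by (subst sum.atMost_Suc_shift)
     (simp add: assms sum_distrib_left power_add power2_eq_square mult_ac)

lemma level_poly_0: "level_poly 0 z = 1"
  by (simp add: level_poly_def antidiag_value_def walk_series_origin)

lemma level_poly_Suc_shifted:
  fixes s :: nat and z :: "real fps"
  defines "A \<equiv> fps_const (axis_value (Suc s))"
  shows "2 * z * level_poly (Suc s) z = (level_poly (Suc s) z - A)
    + z\<^sup>2 * (level_poly (Suc s) z - A * z ^ Suc s) + z * level_poly s z + z\<^sup>2 * level_poly s z"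
proof -
  define G where "G x = fps_const (antidiag_value (Suc s) x)" for x
  define H where "H x = fps_const (antidiag_value s x)" for x
  define f' where "f' = level_poly (Suc s) z"
  define f where "f = level_poly s z"
  have f': "f' = (\<Sum>x\<le>Suc s. G (int x) * z ^ x)" and f: "f = (\<Sum>x\<le>s. H (int x) * z ^ x)"
    by (simp_all add: f'_def f_def level_poly_def G_def H_def)
  have "G 0 = A" "G (int (Suc s)) = A"
    by (simp_all add: G_def A_def antidiag_value_ends del: of_nat_Suc)
  have "G (int (Suc s) + 1) = 0" "G (-1) = 0" "H (int (Suc s)) = 0" "H (-1) = 0"
    by (simp_all add: G_def H_def antidiag_value_outside)
  have "2 * z * f' = (\<Sum>x\<le>Suc s. (2 * G (int x)) * z ^ (x + 1))"
    unfolding f' sum_distrib_left by (intro sum.cong refl) (simp add: mult_ac)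
  also have "\<dots> = (\<Sum>x\<le>Suc s. G (int x + 1) * z ^ (x + 1)) + (\<Sum>x\<le>Suc s. G (int x - 1) * z ^ (x + 1))
      + (\<Sum>x\<le>Suc s. H (int x) * z ^ (x + 1)) + (\<Sum>x\<le>Suc s. H (int x - 1) * z ^ (x + 1))"
  proof (simp only: sum.distrib[symmetric], intro sum.cong refl)
    fix x assume "x \<in> {..Suc s}"
    hence "2 * G (int x) = G (int x + 1) + G (int x - 1) + H (int x) + H (int x - 1)"
      using antidiag_value_rec[of "int x" s] by (simp add: G_def H_def algebra_simps)
    thus "2 * G (int x) * z ^ (x + 1) = G (int x + 1) * z ^ (x + 1) + G (int x - 1) * z ^ (x + 1)
        + H (int x) * z ^ (x + 1) + H (int x - 1) * z ^ (x + 1)"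
      by (simp add: distrib_right)
  qed
  also have "(\<Sum>x\<le>Suc s. G (int x + 1) * z ^ (x + 1)) = f' - A"
    using \<open>G (int (Suc s) + 1) = 0\<close>
    by (subst sum_atMost_shift_down) (simp_all add: f' \<open>G 0 = A\<close>)
  also have "(\<Sum>x\<le>Suc s. G (int x - 1) * z ^ (x + 1)) = z\<^sup>2 * (f' - A * z ^ Suc s)"
  proof -
    have "(\<Sum>x\<le>s. G (int x) * z ^ x) = f' - A * z ^ Suc s"
      using \<open>G (int (Suc s)) = A\<close> by (simp add: f' del: of_nat_Suc)
    thus ?thesis by (simp only: sum_atMost_shift_up[of G, OF \<open>G (-1) = 0\<close>])
  qed
  also have "(\<Sum>x\<le>Suc s. H (int x) * z ^ (x + 1)) = z * f"
    using \<open>H (int (Suc s)) = 0\<close> by (simp add: f sum_distrib_left mult_ac del: of_nat_Suc)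
  also have "(\<Sum>x\<le>Suc s. H (int x - 1) * z ^ (x + 1)) = z\<^sup>2 * f"
    unfolding f by (rule sum_atMost_shift_up) fact
  finally show ?thesis
    unfolding f'_def f_def .
qed

lemma level_poly_Suc:
  "(1 - z)\<^sup>2 * level_poly (Suc s) z
    = fps_const (axis_value (Suc s)) * (1 + z ^ (s + 3)) - z * (1 + z) * level_poly s z"
proof -
  have kernel: "(1 - z)\<^sup>2 * f' = A * (1 + z\<^sup>2 * w) - z * (1 + z) * f"
    if "2 * z * f' = (f' - A) + z\<^sup>2 * (f' - A * w) + z * f + z\<^sup>2 * f" for f' f A w :: "real fps"
    using that by algebra
  have "s + 3 = 2 + Suc s" by simp
  hence "z ^ (s + 3) = z\<^sup>2 * z ^ Suc s"
    by (simp only: power_add)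
  thus ?thesis
    using kernel[OF level_poly_Suc_shifted] by simp
qed

lemma kernel_telescope:
  fixes y z :: "'a::comm_ring_1" and a f :: "nat \<Rightarrow> 'a"
  assumes root: "y * (z * (1 + z)) = - (1 - z)\<^sup>2"
    and f0: "(1 - z)\<^sup>2 * f 0 = a 0 * (1 + z\<^sup>2) - 2 * z"
    and fSuc: "\<And>s. (1 - z)\<^sup>2 * f (Suc s) = a (Suc s) * (1 + z ^ (s + 3)) - z * (1 + z) * f s"
  shows "(\<Sum>s\<le>N. a s * y ^ s * (1 + z ^ (s + 2))) = 2 * z - y ^ (N + 1) * (z * (1 + z)) * f N"
proof (induct N)
  case 0
  show ?case using root f0 by (simp add: power2_eq_square)
next
  case (Suc N)
  have step: "y * (z * (1 + z)) * f (Suc N) = - (a (Suc N) * (1 + z ^ (N + 3)) - z * (1 + z) * f N)"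
    using root fSuc[of N] by (metis minus_mult_left mult.assoc mult.commute)
  have "y ^ (Suc N + 1) * (z * (1 + z)) * f (Suc N) = y ^ (N + 1) * (y * (z * (1 + z)) * f (Suc N))"
    by (simp add: mult_ac)
  also have "\<dots> = y ^ (N + 1) * (z * (1 + z)) * f N - a (Suc N) * y ^ Suc N * (1 + z ^ (Suc N + 2))"
    unfolding step by (simp add: algebra_simps eval_nat_numeral)
  finally have shifted: "y ^ (Suc N + 1) * (z * (1 + z)) * f (Suc N)
      = y ^ (N + 1) * (z * (1 + z)) * f N - a (Suc N) * y ^ Suc N * (1 + z ^ (Suc N + 2))" .
  have "(\<Sum>s\<le>Suc N. a s * y ^ s * (1 + z ^ (s + 2)))
      = 2 * z - y ^ (N + 1) * (z * (1 + z)) * f N + a (Suc N) * y ^ Suc N * (1 + z ^ (Suc N + 2))"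
    using Suc by simp
  also have "\<dots> = 2 * z - y ^ (Suc N + 1) * (z * (1 + z)) * f (Suc N)"
    by (simp only: shifted) simp
  finally show ?case .
qed

definition rho_plus :: "real fps" where
  "rho_plus = fps_X\<^sup>2 / (1 - fps_X)"

definition rho_minus :: "real fps" where
  "rho_minus = fps_X\<^sup>2 / (1 + fps_X)"

lemma rho_plus_eq: "rho_plus = fps_X\<^sup>2 * inverse (1 - fps_X)"
  by (simp add: rho_plus_def fps_divide_unit)

lemma rho_minus_eq: "rho_minus = fps_X\<^sup>2 * inverse (1 + fps_X)"
  by (simp add: rho_minus_def fps_divide_unit)

lemma one_minus_X_inverse: "(1 - fps_X) * inverse (1 - fps_X :: real fps) = 1"
  by (rule inverse_mult_eq_1') simp

lemma one_plus_X_inverse: "(1 + fps_X) * inverse (1 + fps_X :: real fps) = 1"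
  by (rule inverse_mult_eq_1') simp

definition kernel_basis :: "nat \<Rightarrow> real fps" where
  "kernel_basis s = (1 + fps_X)\<^sup>2 * rho_plus ^ s + (1 - fps_X)\<^sup>2 * rho_minus ^ s"

definition kernel_comb :: "(nat \<Rightarrow> real) \<Rightarrow> nat \<Rightarrow> real fps" where
  "kernel_comb a N = (\<Sum>s\<le>N. fps_const (a s) * kernel_basis s)"

text \<open>The truncations of \<open>\<Sum>\<^sub>s a\<^sub>s kernel_basis s = 2 (1 - X\<^sup>2)\<close>; since \<open>kernel_basis s\<close>
  has order \<open>2 s\<close>, the terms omitted from the \<open>N\<close>-th one are divisible by \<open>X\<^bsup>2N+2\<^esup>\<close>.\<close>
definition kernel_solution :: "(nat \<Rightarrow> real) \<Rightarrow> bool" where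
  "kernel_solution a \<longleftrightarrow> (\<forall>N. fps_X ^ (2 * N + 2) dvd kernel_comb a N - 2 * (1 - fps_X\<^sup>2))"

lemma kernel_basis_eq:
  "kernel_basis s = fps_X ^ (2 * s)
     * ((1 + fps_X)\<^sup>2 * inverse (1 - fps_X) ^ s + (1 - fps_X)\<^sup>2 * inverse (1 + fps_X) ^ s)"
proof -
  have "(fps_X\<^sup>2 * g) ^ s = fps_X ^ (2 * s) * g ^ s" for g :: "real fps"
    by (simp only: power_mult_distrib power_mult)
  thus ?thesis
    unfolding kernel_basis_def rho_plus_eq rho_minus_eq by (simp only: distrib_left mult_ac)
qed

lemma kernel_basis_nth_order: "kernel_basis s $ (2 * s) = 2"
  by (simp add: kernel_basis_eq fps_X_power_mult_nth fps_nth_power_0)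

lemma fps_X_power_dvd_nth:
  assumes "fps_X ^ k dvd f" "j < k"
  shows "f $ j = 0"
proof -
  obtain g where "f = fps_X ^ k * g"
    using assms(1) by (elim dvdE)
  thus ?thesis using assms(2) by (simp add: fps_X_power_mult_nth)
qed

lemma kernel_solution_unique:
  assumes "kernel_solution a" "kernel_solution b"
  shows "a = b"
proof
  fix N show "a N = b N"
  proof (induct N rule: less_induct)
    case (less N)
    have "fps_X ^ (2 * N + 2) dvd (kernel_comb a N - 2 * (1 - fps_X\<^sup>2)) - (kernel_comb b N - 2 * (1 - fps_X\<^sup>2))"
      using assms unfolding kernel_solution_def by (blast intro: dvd_diff)
    moreover have "kernel_comb a N - kernel_comb b N = fps_const (a N - b N) * kernel_basis N"
    proof -
      have "kernel_comb a N - kernel_comb b N = (\<Sum>s\<le>N. fps_const (a s - b s) * kernel_basis s)"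
        by (simp add: kernel_comb_def sum_subtractf algebra_simps flip: fps_const_sub)
      also have "\<dots> = (\<Sum>s\<in>{N}. fps_const (a s - b s) * kernel_basis s)"
        by (rule sum.mono_neutral_right) (use less in auto)
      finally show ?thesis by simp
    qed
    ultimately have "(fps_const (a N - b N) * kernel_basis N) $ (2 * N) = 0"
      by (intro fps_X_power_dvd_nth[of "2 * N + 2"]) simp_all
    thus ?case by (simp add: kernel_basis_nth_order)
  qed
qed

definition kernel_z :: "real fps" where
  "kernel_z = (1 - fps_X) / (1 + fps_X)"

lemma kernel_z_eq: "kernel_z = (1 - fps_X) * inverse (1 + fps_X)"
  by (simp add: kernel_z_def fps_divide_unit)

text \<open>This relation makes the equations \<open>level_poly_Suc\<close> telescope; the root \<open>z\<close> is chosen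
  so that \<open>y = -(1 - z)\<^sup>2 / (z (1 + z))\<close> has order 2 and the remainders vanish \<open>X\<close>-adically.\<close>
lemma kernel_root: "(-2 * rho_plus) * (kernel_z * (1 + kernel_z)) = - (1 - kernel_z)\<^sup>2"
  using one_minus_X_inverse one_plus_X_inverse unfolding kernel_z_eq rho_plus_eq by algebra

lemma kernel_basis_substitution:
  "(1 + fps_X)\<^sup>2 * ((-2 * rho_plus) ^ s * (1 + kernel_z ^ (s + 2))) = (-2) ^ s * kernel_basis s"
proof -
  have z: "(1 + fps_X) * kernel_z = 1 - fps_X" and rho: "kernel_z * rho_plus = rho_minus"
    using one_minus_X_inverse one_plus_X_inverse
    unfolding kernel_z_eq rho_plus_eq rho_minus_eq by algebra+
  have "(1 + fps_X)\<^sup>2 * rho_plus ^ s * kernel_z ^ (s + 2) = ((1 + fps_X) * kernel_z)\<^sup>2 * (kernel_z * rho_plus) ^ s"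
    by (simp add: power_add power_mult_distrib power2_eq_square mult_ac)
  also have "\<dots> = (1 - fps_X)\<^sup>2 * rho_minus ^ s"
    by (simp only: z rho)
  finally have rho_minus: "(1 + fps_X)\<^sup>2 * rho_plus ^ s * kernel_z ^ (s + 2) = (1 - fps_X)\<^sup>2 * rho_minus ^ s" .
  have "(1 + fps_X)\<^sup>2 * ((-2 * rho_plus) ^ s * (1 + kernel_z ^ (s + 2)))
      = (-2) ^ s * ((1 + fps_X)\<^sup>2 * rho_plus ^ s + (1 + fps_X)\<^sup>2 * rho_plus ^ s * kernel_z ^ (s + 2))"
    by (simp only: power_mult_distrib distrib_left mult_1_right mult_1_left mult_ac)
  thus ?thesis
    by (simp only: rho_minus kernel_basis_def)
qed

lemma kernel_solution_axis_value: "kernel_solution (\<lambda>s. axis_value s * (-2) ^ s)"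
  unfolding kernel_solution_def
proof
  fix N
  define y where "y = -2 * rho_plus"
  define z where "z = kernel_z"
  have "(\<Sum>s\<le>N. fps_const (axis_value s) * y ^ s * (1 + z ^ (s + 2)))
      = 2 * z - y ^ (N + 1) * (z * (1 + z)) * level_poly N z"
  proof (rule kernel_telescope)
    show "y * (z * (1 + z)) = - (1 - z)\<^sup>2"
      unfolding y_def z_def by (rule kernel_root)
    show "(1 - z)\<^sup>2 * level_poly 0 z = fps_const (axis_value 0) * (1 + z\<^sup>2) - 2 * z"
      by (simp add: level_poly_0 axis_value_def walk_series_origin power2_eq_square algebra_simps)
  qed (rule level_poly_Suc)
  moreover have "fps_const (axis_value s * (-2) ^ s) * kernel_basis s
      = (1 + fps_X)\<^sup>2 * (fps_const (axis_value s) * y ^ s * (1 + z ^ (s + 2)))" for s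
  proof -
    have "(-2 :: real fps) = fps_const (-2)"
      by (simp add: numeral_fps_const)
    hence "fps_const (axis_value s * (-2) ^ s) = fps_const (axis_value s) * (-2 :: real fps) ^ s"
      by (simp only: fps_const_power fps_const_mult)
    thus ?thesis
      using kernel_basis_substitution[of s] by (simp add: y_def z_def mult_ac)
  qed
  ultimately have "kernel_comb (\<lambda>s. axis_value s * (-2) ^ s) N
      = (1 + fps_X)\<^sup>2 * (2 * z) - (1 + fps_X)\<^sup>2 * (y ^ (N + 1) * (z * (1 + z)) * level_poly N z)"
    by (simp add: kernel_comb_def right_diff_distrib flip: sum_distrib_left)
  also have "(1 + fps_X)\<^sup>2 * (2 * z) = 2 * (1 - fps_X\<^sup>2)"
    using one_plus_X_inverse unfolding z_def kernel_z_eq by algebra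
  also have "y ^ (N + 1) = fps_X ^ (2 * N + 2) * ((-2) ^ (N + 1) * inverse (1 - fps_X) ^ (N + 1))"
  proof -
    have "2 * N + 2 = 2 * (N + 1)" by simp
    hence "(fps_X\<^sup>2) ^ (N + 1) = (fps_X ^ (2 * N + 2) :: real fps)"
      by (simp only: power_mult)
    thus ?thesis by (simp only: y_def rho_plus_eq power_mult_distrib mult_ac)
  qed
  finally show "fps_X ^ (2 * N + 2) dvd kernel_comb (\<lambda>s. axis_value s * (-2) ^ s) N - 2 * (1 - fps_X\<^sup>2)"
    by (simp add: mult_ac)
qed

section \<open>The umbral side\<close>

text \<open>A \<open>real poly fps\<close> is a series in \<open>X\<close> whose coefficients are polynomials in the umbral
  variable \<open>T\<close>; \<open>umbral_coeffs\<close> evaluates \<open>T\<^sup>k\<close> to \<open>umbral_moment k\<close> coefficientwise.\<close>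

abbreviation lift_coeffs :: "real fps \<Rightarrow> real poly fps" where
  "lift_coeffs \<equiv> fps_map (\<lambda>c. [:c:])"

abbreviation shift_coeffs :: "real poly fps \<Rightarrow> real poly fps" where
  "shift_coeffs \<equiv> fps_map (\<lambda>p. pcompose p [:1, 1:])"

abbreviation umbral_coeffs :: "real poly fps \<Rightarrow> real fps" where
  "umbral_coeffs \<equiv> fps_map umbral"

lemma umbral_coeffs_lift_mult: "umbral_coeffs (lift_coeffs g * F) = g * umbral_coeffs F"
  by (rule fps_ext) (simp add: fps_mult_nth umbral.map_sum umbral_smult)

lemma umbral_coeffs_shift: "umbral_coeffs (shift_coeffs F + F) = - fps_map (\<lambda>p. coeff p 1) F"
  by (rule fps_ext) (simp add: umbral_add umbral_pcompose_shift eq_neg_iff_add_eq_0)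

definition fpsT :: "real poly fps" where
  "fpsT = fps_const [:0, 1:]"

lemma fps_const_T_polys: "fps_const [:1, 2:] = 2 * fpsT + 1" "fps_const [:0, 1, 1:] = fpsT * (1 + fpsT)"
  by (simp_all add: fpsT_def numeral_fps_const one_pCons numeral_poly flip: fps_const_add fps_const_mult)

definition geom_T :: "real poly fps" where
  "geom_T = fps_right_inverse (1 - fps_X\<^sup>2 * fpsT\<^sup>2) 1"

lemma geom_T: "(1 - fps_X\<^sup>2 * fpsT\<^sup>2) * geom_T = 1"
  unfolding geom_T_def by (rule fps_right_inverse) (simp add: fpsT_def)

lemma shift_fpsT: "shift_coeffs fpsT = fpsT + 1"
  by (simp add: fpsT_def shift_poly.fps_map_const pcompose_pCons one_pCons flip: fps_const_add)

lemma shift_geom_T: "(1 - fps_X\<^sup>2 * (fpsT + 1)\<^sup>2) * shift_coeffs geom_T = 1"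
  using arg_cong[OF geom_T, of shift_coeffs]
  by (simp add: shift_poly.fps_map_mult shift_poly.fps_map_diff shift_poly.fps_map_1
      shift_poly.fps_map_power shift_poly.fps_map_X shift_fpsT)

lemma umbral_coeffs_geom_T: "umbral_coeffs (fpsT * geom_T + (fpsT + 1) * shift_coeffs geom_T) = -1"
proof -
  have "fps_map (\<lambda>p. poly p 0) geom_T = 1"
    using arg_cong[OF geom_T, of "fps_map (\<lambda>p. poly p 0)"]
    by (simp add: eval0_poly.fps_map_mult eval0_poly.fps_map_diff eval0_poly.fps_map_1
        eval0_poly.fps_map_power eval0_poly.fps_map_X eval0_poly.fps_map_const fpsT_def)
  moreover have "fps_map (\<lambda>p. coeff p 1) (fpsT * geom_T) = fps_map (\<lambda>p. poly p 0) geom_T"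
    by (rule fps_ext) (simp add: fpsT_def poly_0_coeff_0)
  ultimately have "fps_map (\<lambda>p. coeff p 1) (fpsT * geom_T) = 1"
    by simp
  moreover have "fpsT * geom_T + (fpsT + 1) * shift_coeffs geom_T = shift_coeffs (fpsT * geom_T) + fpsT * geom_T"
    by (simp add: shift_poly.fps_map_mult shift_fpsT)
  ultimately show ?thesis
    by (simp only: umbral_coeffs_shift)
qed

text \<open>In the application \<open>a, b\<close> are \<open>T (1 + T) X\<^sup>2/(1 \<mp> X)\<close>, \<open>Sp, Sm\<close> their geometric sums
  truncated at \<open>N\<close>, and \<open>e = X\<^bsup>2N+2\<^esup>\<close>; the denominators \<open>1 \<mp> x - x\<^sup>2 T (1 + T)\<close> of the
  full geometric series multiply to \<open>(1 - x\<^sup>2 T\<^sup>2) (1 - x\<^sup>2 (T + 1)\<^sup>2)\<close>.\<close>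
lemma kernel_ring_identity:
  fixes x T a b Sp Sm e Kp Km :: "'a::idom"
  assumes "(1 - x) * a = x\<^sup>2 * (T * (1 + T))" "(1 + x) * b = x\<^sup>2 * (T * (1 + T))"
    and "(1 - a) * Sp = 1 - e * Kp" "(1 - b) * Sm = 1 - e * Km"
  shows "x\<^sup>2 * (2 * T + 1) * ((1 + x)\<^sup>2 * (T * (1 + T)) * Sp + (1 - x)\<^sup>2 * (T * (1 + T)) * Sm)
      * ((1 - x\<^sup>2 * T\<^sup>2) * (1 - x\<^sup>2 * (T + 1)\<^sup>2))
    = 2 * (1 - x\<^sup>2)\<^sup>2 * (T * (1 - x\<^sup>2 * (T + 1)\<^sup>2) + (T + 1) * (1 - x\<^sup>2 * T\<^sup>2))
      - 2 * (1 - x\<^sup>2) * (2 * T + 1) * ((1 - x\<^sup>2 * T\<^sup>2) * (1 - x\<^sup>2 * (T + 1)\<^sup>2))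
      - x\<^sup>2 * e * ((2 * T + 1) * (T * (1 + T)) * (1 - x\<^sup>2)
          * ((1 + x) * (1 + x - x\<^sup>2 * (T * (1 + T))) * Kp + (1 - x) * (1 - x - x\<^sup>2 * (T * (1 + T))) * Km))"
  using assms by algebra

lemma lift_coeffs_rho:
  "(1 - fps_X) * lift_coeffs rho_plus = fps_X\<^sup>2" "(1 + fps_X) * lift_coeffs rho_minus = fps_X\<^sup>2"
  "lift_coeffs rho_plus = fps_X\<^sup>2 * lift_coeffs (inverse (1 - fps_X))"
  "lift_coeffs rho_minus = fps_X\<^sup>2 * lift_coeffs (inverse (1 + fps_X))"
proof -
  have "(1 - fps_X) * rho_plus = fps_X\<^sup>2" "(1 + fps_X) * rho_minus = fps_X\<^sup>2"
    using one_minus_X_inverse one_plus_X_inverse unfolding rho_plus_eq rho_minus_eq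
    by (simp_all add: mult.left_commute)
  from this[THEN arg_cong, of lift_coeffs]
  show "(1 - fps_X) * lift_coeffs rho_plus = fps_X\<^sup>2" "(1 + fps_X) * lift_coeffs rho_minus = fps_X\<^sup>2"
    by (simp_all add: const_poly.fps_map_mult const_poly.fps_map_diff const_poly.fps_map_add
        const_poly.fps_map_1 const_poly.fps_map_X const_poly.fps_map_power)
  show "lift_coeffs rho_plus = fps_X\<^sup>2 * lift_coeffs (inverse (1 - fps_X))"
    "lift_coeffs rho_minus = fps_X\<^sup>2 * lift_coeffs (inverse (1 + fps_X))"
    by (simp_all add: rho_plus_eq rho_minus_eq const_poly.fps_map_mult const_poly.fps_map_X
        const_poly.fps_map_power)
qed

lemma lifted_kernel_sum:
  fixes N :: nat
  defines "W \<equiv> fpsT * (1 + fpsT)"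
  shows "(\<Sum>s\<le>N. lift_coeffs (fps_X\<^sup>2 * kernel_basis s) * fps_const ([:1, 2:] * [:0, 1, 1:] ^ (s + 1)))
    = fps_X\<^sup>2 * (2 * fpsT + 1) * ((1 + fps_X)\<^sup>2 * W * (\<Sum>s\<le>N. (W * lift_coeffs rho_plus) ^ s)
        + (1 - fps_X)\<^sup>2 * W * (\<Sum>s\<le>N. (W * lift_coeffs rho_minus) ^ s))"
proof -
  have "lift_coeffs (fps_X\<^sup>2 * kernel_basis s) * fps_const ([:1, 2:] * [:0, 1, 1:] ^ (s + 1))
      = fps_X\<^sup>2 * (2 * fpsT + 1) * ((1 + fps_X)\<^sup>2 * W * (W * lift_coeffs rho_plus) ^ s
        + (1 - fps_X)\<^sup>2 * W * (W * lift_coeffs rho_minus) ^ s)" for s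
    unfolding fps_const_mult[symmetric] fps_const_power[symmetric] fps_const_T_polys W_def[symmetric]
    by (simp add: kernel_basis_def const_poly.fps_map_mult const_poly.fps_map_add
        const_poly.fps_map_diff const_poly.fps_map_1 const_poly.fps_map_X const_poly.fps_map_power
        power_mult_distrib algebra_simps)
  thus ?thesis
    by (simp add: distrib_left sum_distrib_left sum.distrib)
qed

lemma lifted_geometric_sums:
  fixes W :: "real poly fps"
  shows "(1 - W * lift_coeffs rho_plus) * (\<Sum>s\<le>N. (W * lift_coeffs rho_plus) ^ s)
      = 1 - fps_X ^ (2 * N + 2) * (W * lift_coeffs (inverse (1 - fps_X))) ^ (N + 1)"
    and "(1 - W * lift_coeffs rho_minus) * (\<Sum>s\<le>N. (W * lift_coeffs rho_minus) ^ s)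
      = 1 - fps_X ^ (2 * N + 2) * (W * lift_coeffs (inverse (1 + fps_X))) ^ (N + 1)"
proof -
  have "2 * N + 2 = 2 * (N + 1)" by simp
  hence "(fps_X\<^sup>2) ^ (N + 1) = (fps_X ^ (2 * N + 2) :: real poly fps)"
    by (simp only: power_mult)
  hence "(W * lift_coeffs rho_plus) ^ Suc N = fps_X ^ (2 * N + 2) * (W * lift_coeffs (inverse (1 - fps_X))) ^ (N + 1)"
    "(W * lift_coeffs rho_minus) ^ Suc N = fps_X ^ (2 * N + 2) * (W * lift_coeffs (inverse (1 + fps_X))) ^ (N + 1)"
    using lift_coeffs_rho(3,4) by (simp_all add: power_mult_distrib mult_ac)
  thus "(1 - W * lift_coeffs rho_plus) * (\<Sum>s\<le>N. (W * lift_coeffs rho_plus) ^ s)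
      = 1 - fps_X ^ (2 * N + 2) * (W * lift_coeffs (inverse (1 - fps_X))) ^ (N + 1)"
    "(1 - W * lift_coeffs rho_minus) * (\<Sum>s\<le>N. (W * lift_coeffs rho_minus) ^ s)
      = 1 - fps_X ^ (2 * N + 2) * (W * lift_coeffs (inverse (1 + fps_X))) ^ (N + 1)"
    by (simp_all only: sum_gp_basic)
qed

lemma bivariate_kernel_sum:
  "\<exists>H. (\<Sum>s\<le>N. lift_coeffs (fps_X\<^sup>2 * kernel_basis s) * fps_const ([:1, 2:] * [:0, 1, 1:] ^ (s + 1)))
     = lift_coeffs (2 * (1 - fps_X\<^sup>2)\<^sup>2) * (fpsT * geom_T + (fpsT + 1) * shift_coeffs geom_T)
       - lift_coeffs (2 * (1 - fps_X\<^sup>2)) * fps_const [:1, 2:] - fps_X ^ (2 * N + 4) * H"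
proof -
  define x :: "real poly fps" where "x = fps_X"
  define W where "W = fpsT * (1 + fpsT)"
  define U where "U = 2 * fpsT + 1"
  define e where "e = x ^ (2 * N + 2)"
  define Kp where "Kp = (W * lift_coeffs (inverse (1 - fps_X))) ^ (N + 1)"
  define Km where "Km = (W * lift_coeffs (inverse (1 + fps_X))) ^ (N + 1)"
  define E where "E = U * W * (1 - x\<^sup>2)
    * ((1 + x) * (1 + x - x\<^sup>2 * W) * Kp + (1 - x) * (1 - x - x\<^sup>2 * W) * Km)"
  define S where "S = (\<Sum>s\<le>N. lift_coeffs (fps_X\<^sup>2 * kernel_basis s) * fps_const ([:1, 2:] * [:0, 1, 1:] ^ (s + 1)))"
  have "(1 - x) * (W * lift_coeffs rho_plus) = x\<^sup>2 * (fpsT * (1 + fpsT))"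
    "(1 + x) * (W * lift_coeffs rho_minus) = x\<^sup>2 * (fpsT * (1 + fpsT))"
    using lift_coeffs_rho(1,2) by (simp_all add: W_def x_def mult_ac)
  with lifted_geometric_sums[of W N]
  have key: "S * ((1 - x\<^sup>2 * fpsT\<^sup>2) * (1 - x\<^sup>2 * (fpsT + 1)\<^sup>2))
    = 2 * (1 - x\<^sup>2)\<^sup>2 * (fpsT * (1 - x\<^sup>2 * (fpsT + 1)\<^sup>2) + (fpsT + 1) * (1 - x\<^sup>2 * fpsT\<^sup>2))
      - 2 * (1 - x\<^sup>2) * U * ((1 - x\<^sup>2 * fpsT\<^sup>2) * (1 - x\<^sup>2 * (fpsT + 1)\<^sup>2)) - x\<^sup>2 * e * E"
    unfolding S_def lifted_kernel_sum U_def W_def E_def e_def Kp_def Km_def x_def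
    by (intro kernel_ring_identity) simp_all
  have "(1 - x\<^sup>2 * fpsT\<^sup>2) * geom_T = 1" "(1 - x\<^sup>2 * (fpsT + 1)\<^sup>2) * shift_coeffs geom_T = 1"
    using geom_T shift_geom_T by (simp_all add: x_def)
  with key have "S = 2 * (1 - x\<^sup>2)\<^sup>2 * (fpsT * geom_T + (fpsT + 1) * shift_coeffs geom_T)
      - 2 * (1 - x\<^sup>2) * U - x\<^sup>2 * e * (E * geom_T * shift_coeffs geom_T)"
    by algebra
  moreover have "x\<^sup>2 * e = fps_X ^ (2 * N + 4)"
  proof -
    have "2 + (2 * N + 2) = 2 * N + 4" by simp
    thus ?thesis by (simp only: x_def e_def power_add[symmetric])
  qed
  moreover have "lift_coeffs (2 * (1 - fps_X\<^sup>2)\<^sup>2) = 2 * (1 - x\<^sup>2)\<^sup>2"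
    "lift_coeffs (2 * (1 - fps_X\<^sup>2)) = 2 * (1 - x\<^sup>2)"
    by (simp_all add: x_def const_poly.fps_map_mult const_poly.fps_map_diff const_poly.fps_map_power
        const_poly.fps_map_X const_poly.fps_map_1 const_poly.fps_map_numeral)
  moreover have "fps_const [:1, 2:] = U"
    by (simp add: U_def fps_const_T_polys)
  ultimately show ?thesis
    unfolding S_def[symmetric] by (intro exI[of _ "E * geom_T * shift_coeffs geom_T"]) (simp only: mult.assoc)
qed

lemma kernel_solution_umbral: "kernel_solution (\<lambda>s. umbral ([:1, 2:] * [:0, 1, 1:] ^ (s + 1)))"
  unfolding kernel_solution_def
proof
  fix N
  define lam where "lam s = umbral ([:1, 2:] * [:0, 1, 1:] ^ (s + 1))" for s
  obtain H where H: "(\<Sum>s\<le>N. lift_coeffs (fps_X\<^sup>2 * kernel_basis s) * fps_const ([:1, 2:] * [:0, 1, 1:] ^ (s + 1)))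
     = lift_coeffs (2 * (1 - fps_X\<^sup>2)\<^sup>2) * (fpsT * geom_T + (fpsT + 1) * shift_coeffs geom_T)
       - lift_coeffs (2 * (1 - fps_X\<^sup>2)) * fps_const [:1, 2:] - fps_X ^ (2 * N + 4) * H"
    using bivariate_kernel_sum by blast
  have "fps_X\<^sup>2 * kernel_comb lam N = umbral_coeffs (\<Sum>s\<le>N. lift_coeffs (fps_X\<^sup>2 * kernel_basis s)
      * fps_const ([:1, 2:] * [:0, 1, 1:] ^ (s + 1)))"
    by (simp add: kernel_comb_def lam_def umbral.fps_map_sum umbral_coeffs_lift_mult umbral.fps_map_const
        sum_distrib_left mult_ac)
  also have "\<dots> = 2 * (1 - fps_X\<^sup>2)\<^sup>2 * (-1) - 2 * (1 - fps_X\<^sup>2) * fps_const (- 2 / 2)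
      - fps_X ^ (2 * N + 4) * umbral_coeffs H"
    unfolding H
    by (simp only: umbral.fps_map_diff umbral_coeffs_lift_mult umbral_coeffs_geom_T umbral.fps_map_const
        umbral_linear fps_map_X_power_mult[of umbral, OF umbral.map_0])
  also have "\<dots> = fps_X\<^sup>2 * (2 * (1 - fps_X\<^sup>2) - fps_X ^ (2 * N + 2) * umbral_coeffs H)"
  proof -
    have "2 * N + 4 = 2 + (2 * N + 2)" by simp
    hence X: "fps_X ^ (2 * N + 4) = fps_X\<^sup>2 * fps_X ^ (2 * N + 2)"
      by (simp only: power_add)
    have c: "fps_const (- 2 / 2 :: real) = - 1"
      by simp
    show ?thesis
      unfolding X c by algebra
  qed
  finally have "fps_X\<^sup>2 * (kernel_comb lam N - 2 * (1 - fps_X\<^sup>2))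
      = fps_X\<^sup>2 * (fps_X ^ (2 * N + 2) * (- umbral_coeffs H))"
    by (simp add: algebra_simps)
  hence "kernel_comb lam N - 2 * (1 - fps_X\<^sup>2) = fps_X ^ (2 * N + 2) * (- umbral_coeffs H)"
    by (subst (asm) mult_left_cancel) simp_all
  thus "fps_X ^ (2 * N + 2) dvd kernel_comb lam N - 2 * (1 - fps_X\<^sup>2)" ..
qed

lemma axis_value_eq: "axis_value s = median_genocchi s / 2 ^ s"
proof -
  have "axis_value s * (-2) ^ s = umbral ([:1, 2:] * [:0, 1, 1:] ^ (s + 1))"
    using kernel_solution_unique[OF kernel_solution_axis_value kernel_solution_umbral] by metis
  also have "\<dots> = (-1) ^ s * median_genocchi s"
    by (rule umbral_genocchi)
  finally have "axis_value s * (-2) ^ s = (-1) ^ s * median_genocchi s" .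
  moreover have "(-2 :: real) ^ s = (-1) ^ s * 2 ^ s"
    by (simp flip: power_mult_distrib)
  ultimately have "(-1) ^ s * (axis_value s * 2 ^ s) = (-1) ^ s * median_genocchi s"
    by (simp only: mult_ac)
  thus ?thesis
    by (simp add: field_simps)
qed

theorem theorem5p5:
  shows "(\<forall>i. summable (\<lambda>n. real (walksB n i 0) / 2 ^ n)) \<and>
    QB_x0_half = Abs_fps (\<lambda>n. median_genocchi n / 2 ^ n) \<and>
    Abs_fps (\<lambda>n. median_genocchi n / 2 ^ n) =
      Abs_fps (\<lambda>n. 2 * (- 1 / 2) ^ n * (\<Sum>k = 0..n+1. real ((n+1) choose k) *
        (2 ^ (n+k+2) - 1) * bernoulli (n+k+2)))"
proof (intro conjI)
  show "\<forall>i. summable (\<lambda>n. real (walksB n i 0) / 2 ^ n)"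
    by (simp add: walksB_eq_num_walks summable_num_walks)
  have "QB_x0_half $ i = axis_value i" for i
    by (simp add: QB_x0_half_def walksB_eq_num_walks axis_value_def walk_series_def
        num_walks_swap[of _ "int i"])
  thus "QB_x0_half = Abs_fps (\<lambda>n. median_genocchi n / 2 ^ n)"
    by (simp add: fps_eq_iff axis_value_eq)
  show "Abs_fps (\<lambda>n. median_genocchi n / 2 ^ n) =
      Abs_fps (\<lambda>n. 2 * (- 1 / 2) ^ n * (\<Sum>k = 0..n+1. real ((n+1) choose k) *
        (2 ^ (n+k+2) - 1) * bernoulli (n+k+2)))"
    unfolding fps_eq_iff fps_nth_Abs_fps median_genocchi_def power_divide by simp
qed

end
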